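(* Let $(J,S)$ be an irreducible and ergodic homogeneous $d$-dimensional multi-time Markov renewal chain, and let $\nu=(\nu_1,\dots,\nu_s)$ be the stationary distribution of the embedded chain $J$. Then for all $j\in E$ and $1\le u,v\le d$: $$\mu^{(u)}_{jj}=\frac{\sum_{i=1}^s\nu_i m^{[u]}_i}{\nu_j},\qquad \mu_{jj}=\frac{\sum_{i=1}^s\nu_i m_i}{\nu_j},$$ $$\mu^{(u,v)}_{jj}=\frac{\sum_{i=1}^s\nu_i m^{[u,v]}_i}{\nu_j}+\frac{\sum_{i=1}^s\sum_{r\ne j}\nu_i p_{ir}\big[m^{[u]}_{ir}\mu^{(v)}_{rj}+m^{[v]}_{ir}\mu^{(u)}_{rj}\big]}{\nu_j}.$$
   Context: $E=\{1,\dots,s\}$; $\mathbb{N}^d$ has the componentwise partial order, $k<l$ meaning $k\le l$, $k\ne l$. A homogeneous $d$-dimensional multi-time Markov renewal chain is a process $(J_n,S_n)_{n\in\mathbb{N}}$, $J_n\in E$, $S_n=(S^{[1]}_n,\dots,S^{[d]}_n)\in\mathbb{N}^d$, $S_0=0_d$, $S_n<S_{n+1}$, with a.s. $\mathbb{P}(J_{n+1}=j,S_{n+1}-S_n=k\mid J_{0:n},S_{0:n})=q_{J_nj}(k)$, $q_{ij}(k)=\mathbb{P}(J_{n+1}=j,S_{n+1}-S_n=k\mid J_n=i)$ independent of $n$. $X_{n+1}=S_{n+1}-S_n$ with coordinates $X^{[u]}_{n+1}$. $p_{ij}=\sum_kq_{ij}(k)$ are the transition probabilities of $J$. $\mathbb{E}_i$: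 expectation given $J_0=i$. Moments: $m^{[u]}_i=\mathbb{E}[X^{[u]}_{n+1}\mid J_n=i]$, $m_i=(m^{[1]}_i,\dots,m^{[d]}_i)$, $m^{[u,v]}_i=\mathbb{E}[X^{[u]}_{n+1}X^{[v]}_{n+1}\mid J_n=i]$, $m^{[u]}_{ir}=\mathbb{E}[X^{[u]}_{n+1}\mid J_n=i,J_{n+1}=r]$. With $m_j=\min\{l\ge1:J_l=j\}$ and $T_j=S_{m_j}$ (coordinates $T^{[u]}_j$): $\mu^{(u)}_{ij}=\mathbb{E}_i[T^{[u]}_j]$, $\mu_{ij}=(\mu^{(1)}_{ij},\dots,\mu^{(d)}_{ij})$, $\mu^{(u,v)}_{ij}=\mathbb{E}_i[T^{[u]}_jT^{[v]}_j]$. For each $u$, $(J,S^{[u]})$ is the marginal one-dimensional-time Markov renewal chain with kernel $q^{[u]}_{ij}(k)=\sum_{k_{1:d}:k_u=k}q_{ij}(k_{1:d})$. The chain $(J,S)$ is irreducible if $J$ is irreducible; it is ergodic if every marginal chain $(J,S^{[u]})$ is positive recurrent (each state $j$ has a.s. finite return time $T^{[u]}_j$ with finite mean) and aperiodic (the distribution of each return time $T^{[u]}_j$ has period $1$). *)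

theory Defs
  imports "HOL-Probability.Probability"
begin

text \<open>States are E = {1..s} (natural numbers); multi-times are functions
  'd \<Rightarrow> nat for a finite index type 'd (so d = CARD('d)), ordered
  componentwise (the library's pointwise order on functions).
  The chain is given on a common sample space with one law M i for each
  initial state i (so E_i is integration w.r.t. M i).\<close>

definition mtmrc ::
  "nat \<Rightarrow> (nat \<Rightarrow> nat \<Rightarrow> ('d::finite \<Rightarrow> nat) \<Rightarrow> real) \<Rightarrow> (nat \<Rightarrow> 'w measure)
   \<Rightarrow> (nat \<Rightarrow> 'w \<Rightarrow> nat) \<Rightarrow> (nat \<Rightarrow> 'w \<Rightarrow> ('d \<Rightarrow> nat)) \<Rightarrow> bool" where
  "mtmrc s q M J S \<longleftrightarrow>
     (\<forall>n \<omega>. J n \<omega> \<in> {1..s}) \<and> (\<forall>\<omega> u. S 0 \<omega> u = 0) \<and> (\<forall>n \<omega>. S n \<omega> < S (Suc n) \<omega>) \<and>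
     (\<forall>i\<in>{1..s}. prob_space (M i) \<and>
        (\<forall>n. J n \<in> measurable (M i) (count_space UNIV) \<and> S n \<in> measurable (M i) (count_space UNIV)) \<and>
        (AE \<omega> in M i. J 0 \<omega> = i) \<and>
        (\<forall>n js ss j k.
           measure (M i) {\<omega> \<in> space (M i). (\<forall>l\<le>n. J l \<omega> = js l \<and> S l \<omega> = ss l) \<and>
                J (Suc n) \<omega> = j \<and> (\<forall>u. S (Suc n) \<omega> u = S n \<omega> u + k u)}
           = q (js n) j k * measure (M i) {\<omega> \<in> space (M i). \<forall>l\<le>n. J l \<omega> = js l \<and> S l \<omega> = ss l}))"

definition ptrans :: "(nat \<Rightarrow> nat \<Rightarrow> ('d \<Rightarrow> nat) \<Rightarrow> real) \<Rightarrow> nat \<Rightarrow> nat \<Rightarrow> real" where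
  "ptrans q i j = (\<Sum>\<^sub>\<infinity>k. q i j k)"

definition irreducible_mtmrc :: "nat \<Rightarrow> (nat \<Rightarrow> nat \<Rightarrow> ('d \<Rightarrow> nat) \<Rightarrow> real) \<Rightarrow> bool" where
  "irreducible_mtmrc s q \<longleftrightarrow>
     (\<forall>i\<in>{1..s}. \<forall>j\<in>{1..s}. (i, j) \<in> {(a, b). a \<in> {1..s} \<and> b \<in> {1..s} \<and> ptrans q a b > 0}\<^sup>*)"

definition stationary_dist :: "nat \<Rightarrow> (nat \<Rightarrow> nat \<Rightarrow> ('d \<Rightarrow> nat) \<Rightarrow> real) \<Rightarrow> (nat \<Rightarrow> real) \<Rightarrow> bool" where
  "stationary_dist s q \<nu> \<longleftrightarrow>
     (\<forall>j\<in>{1..s}. \<nu> j \<ge> 0) \<and> (\<Sum>j=1..s. \<nu> j) = 1 \<and>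
     (\<forall>j\<in>{1..s}. \<nu> j = (\<Sum>i=1..s. \<nu> i * ptrans q i j))"

definition firstret :: "(nat \<Rightarrow> 'w \<Rightarrow> nat) \<Rightarrow> nat \<Rightarrow> 'w \<Rightarrow> nat" where
  "firstret J j \<omega> = (LEAST l. l \<ge> 1 \<and> J l \<omega> = j)"

definition Tret :: "(nat \<Rightarrow> 'w \<Rightarrow> nat) \<Rightarrow> (nat \<Rightarrow> 'w \<Rightarrow> ('d \<Rightarrow> nat)) \<Rightarrow> nat \<Rightarrow> 'w \<Rightarrow> ('d \<Rightarrow> nat)" where
  "Tret J S j \<omega> = S (firstret J j \<omega>) \<omega>"

text \<open>Ergodic: every marginal chain (J, S^[u]) is positive recurrent and aperiodic.\<close>
definition ergodic_mtmrc ::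
  "nat \<Rightarrow> (nat \<Rightarrow> 'w measure) \<Rightarrow> (nat \<Rightarrow> 'w \<Rightarrow> nat) \<Rightarrow> (nat \<Rightarrow> 'w \<Rightarrow> ('d \<Rightarrow> nat)) \<Rightarrow> bool" where
  "ergodic_mtmrc s M J S \<longleftrightarrow>
     (\<forall>u. \<forall>j\<in>{1..s}.
        (AE \<omega> in M j. \<exists>l\<ge>1. J l \<omega> = j) \<and>
        (\<integral>\<^sup>+\<omega>. of_nat (Tret J S j \<omega> u) \<partial>M j) < \<infinity> \<and>
        Gcd {k. measure (M j) {\<omega> \<in> space (M j). (\<exists>l\<ge>1. J l \<omega> = j) \<and> Tret J S j \<omega> u = k} > 0} = 1)"

text \<open>Moments (nonnegative, possibly infinite, hence in ennreal).\<close>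
definition m1 :: "nat \<Rightarrow> (nat \<Rightarrow> nat \<Rightarrow> ('d \<Rightarrow> nat) \<Rightarrow> real) \<Rightarrow> 'd \<Rightarrow> nat \<Rightarrow> ennreal" where
  "m1 s q u i = (\<Sum>j=1..s. \<integral>\<^sup>+k. ennreal (q i j k * real (k u)) \<partial>count_space UNIV)"

definition m2 :: "nat \<Rightarrow> (nat \<Rightarrow> nat \<Rightarrow> ('d \<Rightarrow> nat) \<Rightarrow> real) \<Rightarrow> 'd \<Rightarrow> 'd \<Rightarrow> nat \<Rightarrow> ennreal" where
  "m2 s q u v i = (\<Sum>j=1..s. \<integral>\<^sup>+k. ennreal (q i j k * real (k u) * real (k v)) \<partial>count_space UNIV)"

text \<open>m^[u]_ir = E[X^[u]_{n+1} | J_n = i, J_{n+1} = r] = (sum_k k_u q_ir(k)) / p_ir.\<close>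
definition m1r :: "(nat \<Rightarrow> nat \<Rightarrow> ('d \<Rightarrow> nat) \<Rightarrow> real) \<Rightarrow> 'd \<Rightarrow> nat \<Rightarrow> nat \<Rightarrow> ennreal" where
  "m1r q u i r = (\<integral>\<^sup>+k. ennreal (q i r k * real (k u)) \<partial>count_space UNIV) / ennreal (ptrans q i r)"

definition mu1 :: "(nat \<Rightarrow> 'w measure) \<Rightarrow> (nat \<Rightarrow> 'w \<Rightarrow> nat) \<Rightarrow> (nat \<Rightarrow> 'w \<Rightarrow> ('d \<Rightarrow> nat)) \<Rightarrow> 'd \<Rightarrow> nat \<Rightarrow> nat \<Rightarrow> ennreal" where
  "mu1 M J S u i j = (\<integral>\<^sup>+\<omega>. of_nat (Tret J S j \<omega> u) \<partial>M i)"

definition mu2 :: "(nat \<Rightarrow> 'w measure) \<Rightarrow> (nat \<Rightarrow> 'w \<Rightarrow> nat) \<Rightarrow> (nat \<Rightarrow> 'w \<Rightarrow> ('d \<Rightarrow> nat)) \<Rightarrow> 'd \<Rightarrow> 'd \<Rightarrow> nat \<Rightarrow> nat \<Rightarrow> ennreal" where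
  "mu2 M J S u v i j = (\<integral>\<^sup>+\<omega>. of_nat (Tret J S j \<omega> u) * of_nat (Tret J S j \<omega> v) \<partial>M i)"

end

theory Submission
  imports Defs
begin

text \<open>Splitting a path at its first jump gives, for \<open>x i = E_i[g(T_j)]\<close>, a linear system
  \<open>x i = c i + (\<Sum>r\<noteq>j. p i r * x r)\<close>: after a jump to \<open>r \<noteq> j\<close> with increment \<open>k\<close> the chain
  restarts from \<open>r\<close> and \<open>T_j\<close> is shifted by \<open>k\<close>. As the sample space carries no shift, the
  splitting is done on the law of the history \<open>(J l, X l)\<close>, \<open>l \<le> n\<close>, which is a product of
  kernel values. Recurrence of \<open>j\<close> spreads to all states by irreducibility, so the shift by \<open>k\<close>
  contributes exact constants. Multiplying the system by the stationary \<open>\<nu> i\<close> and summing,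
  stationarity cancels the terms with \<open>r \<noteq> j\<close> and leaves Kac's identity
  \<open>\<nu> j * x j = (\<Sum>i. \<nu> i * c i)\<close>. For \<open>g = T^[u]\<close> this gives \<open>c i = m^[u]_i\<close>; for
  \<open>g = T^[u] T^[v]\<close> the shift produces the cross terms \<open>p_ir m^[u]_ir \<mu>^(v)_rj\<close>, and the
  finiteness needed for the cancellation comes from truncating the return time.\<close>

lemma measurable_count_space_apply2:
  fixes f :: "'a \<Rightarrow> 'b::countable" and g :: "'a \<Rightarrow> 'c::countable"
  assumes "f \<in> measurable M (count_space UNIV)" "g \<in> measurable M (count_space UNIV)"
  shows "(\<lambda>x. h (f x) (g x)) \<in> measurable M (count_space UNIV)"
proof -
  have "(\<lambda>x. (\<lambda>b x. h (f x) b) (g x) x) \<in> measurable M (count_space UNIV)"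
  proof (rule measurable_compose_countable[OF _ assms(2)])
    fix b
    show "(\<lambda>x. h (f x) b) \<in> measurable M (count_space UNIV)"
      using measurable_compose[OF assms(1), of "\<lambda>a. h a b" "count_space UNIV"] by simp
  qed
  then show ?thesis by simp
qed

lemma nn_integral_count_space_length_Suc:
  fixes f :: "'a list \<Rightarrow> ennreal"
  shows "(\<integral>\<^sup>+xs. f xs \<partial>count_space {xs. length xs = Suc n})
       = (\<integral>\<^sup>+x. \<integral>\<^sup>+ys. f (x#ys) \<partial>count_space {ys. length ys = n} \<partial>count_space UNIV)"
proof -
  let ?Cons = "\<lambda>p. fst p # snd p" and ?L = "{ys. length ys = n}"
  have "(\<integral>\<^sup>+x. \<integral>\<^sup>+ys. f (x#ys) \<partial>count_space ?L \<partial>count_space UNIV)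
      = (\<integral>\<^sup>+x. \<integral>\<^sup>+ys. (\<lambda>p. f (?Cons p) * indicator (UNIV \<times> ?L) p) (x, ys)
            \<partial>count_space UNIV \<partial>count_space UNIV)"
    by (subst nn_integral_count_space_indicator) (auto intro!: nn_integral_cong split: split_indicator)
  also have "\<dots> = (\<integral>\<^sup>+p. f (?Cons p) * indicator (UNIV \<times> ?L) p \<partial>count_space UNIV)"
    by (rule nn_integral_fst_count_space)
  also have "\<dots> = (\<integral>\<^sup>+p. f (?Cons p) \<partial>count_space (UNIV \<times> ?L))"
    by (subst nn_integral_count_space_indicator) auto
  also have "\<dots> = (\<integral>\<^sup>+xs. f xs \<partial>count_space {xs. length xs = Suc n})"
    by (rule nn_integral_bij_count_space)
      (auto simp: bij_betw_def inj_on_def image_iff length_Suc_conv)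
  finally show ?thesis by simp
qed

lemma ennreal_eq_divide_if_mult_eq: "0 < (a::real) \<Longrightarrow> ennreal a * x = c \<Longrightarrow> x = c / ennreal a"
  by (metis ennreal_eq_0_iff ennreal_mult_divide_eq ennreal_neq_top mult.commute not_le)

lemma sum_mult_eq_sum_imp_eq_one:
  fixes p h :: "'a \<Rightarrow> real"
  assumes "finite R" and p_nonneg: "\<And>r. r \<in> R \<Longrightarrow> 0 \<le> p r" and h_le: "\<And>r. r \<in> R \<Longrightarrow> h r \<le> 1"
    and sum_eq: "(\<Sum>r\<in>R. p r * h r) = (\<Sum>r\<in>R. p r)" and "b \<in> R" and "0 < p b"
  shows "h b = 1"
proof -
  have "(\<Sum>r\<in>R. p r * (1 - h r)) = 0"
    using sum_eq by (simp add: right_diff_distrib sum_subtractf)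
  moreover have "\<forall>r\<in>R. 0 \<le> p r * (1 - h r)"
    using p_nonneg h_le by simp
  ultimately have "p b * (1 - h b) = 0"
    using \<open>finite R\<close> \<open>b \<in> R\<close> by (simp add: sum_nonneg_eq_0_iff)
  then show ?thesis using \<open>0 < p b\<close> by simp
qed

section \<open>Kac's formula for an irreducible stationary kernel\<close>

locale stationary_irreducible =
  fixes s :: nat and P :: "nat \<Rightarrow> nat \<Rightarrow> real" and \<nu> :: "nat \<Rightarrow> real"
  assumes P_nonneg: "\<And>a b. a \<in> {1..s} \<Longrightarrow> b \<in> {1..s} \<Longrightarrow> 0 \<le> P a b"
    and irreducible: "\<forall>a\<in>{1..s}. \<forall>b\<in>{1..s}. (a, b) \<in> {(a, b). a \<in> {1..s} \<and> b \<in> {1..s} \<and> 0 < P a b}\<^sup>*"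
    and stationary: "\<forall>b\<in>{1..s}. \<nu> b = (\<Sum>a=1..s. \<nu> a * P a b)"
    and nu_nonneg: "\<forall>a\<in>{1..s}. 0 \<le> \<nu> a"
    and nu_sum: "(\<Sum>a=1..s. \<nu> a) = 1"
begin

lemma nu_pos:
  assumes b: "b \<in> {1..s}"
  shows "0 < \<nu> b"
proof (rule ccontr)
  assume "\<not> 0 < \<nu> b"
  then have b0: "\<nu> b = 0" using nu_nonneg b by force
  have "\<nu> a = 0" if "(a, b) \<in> {(a, b). a \<in> {1..s} \<and> b \<in> {1..s} \<and> 0 < P a b}\<^sup>*" for a
    using that
  proof (induction rule: converse_rtrancl_induct)
    case base
    then show ?case by (rule b0)
  next
    case (step a c)
    then have a: "a \<in> {1..s}" and c: "c \<in> {1..s}" and pac: "0 < P a c" by auto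
    have "\<nu> a * P a c \<le> (\<Sum>a=1..s. \<nu> a * P a c)"
      using a c by (intro member_le_sum) (auto intro!: mult_nonneg_nonneg nu_nonneg[rule_format] P_nonneg)
    also have "\<dots> = 0" using stationary c step.IH by simp
    finally have "\<nu> a * P a c \<le> 0" .
    moreover have "0 \<le> \<nu> a" using nu_nonneg a by blast
    ultimately show ?case using pac by (simp add: mult_le_0_iff)
  qed
  then have "\<forall>a\<in>{1..s}. \<nu> a = 0" using irreducible b by blast
  then show False using nu_sum by simp
qed

lemma reachable_avoiding_induct:
  assumes j: "j \<in> {1..s}" and base: "Pr j"
    and step: "\<And>a b. a \<in> {1..s} \<Longrightarrow> Pr a \<Longrightarrow> b \<in> {1..s} - {j} \<Longrightarrow> 0 < P a b \<Longrightarrow> Pr b"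
    and b: "b \<in> {1..s}"
  shows "Pr b"
proof -
  have "(j, b) \<in> {(a, b). a \<in> {1..s} \<and> b \<in> {1..s} \<and> 0 < P a b}\<^sup>*" using irreducible j b by blast
  then show ?thesis
  proof (induction rule: rtrancl_induct)
    case base
    then show ?case by (rule assms(2))
  next
    case (step a c)
    then show ?case using assms(3)[of a c] base by (cases "c = j") auto
  qed
qed

lemma sum_stationary_weighted:
  assumes "R \<subseteq> {1..s}"
  shows "(\<Sum>i=1..s. ennreal (\<nu> i) * (\<Sum>r\<in>R. ennreal (P i r) * z r)) = (\<Sum>r\<in>R. ennreal (\<nu> r) * z r)"
proof -
  have "(\<Sum>i=1..s. ennreal (\<nu> i) * (\<Sum>r\<in>R. ennreal (P i r) * z r))
      = (\<Sum>i=1..s. \<Sum>r\<in>R. ennreal (\<nu> i) * (ennreal (P i r) * z r))"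
    by (simp add: sum_distrib_left)
  also have "\<dots> = (\<Sum>r\<in>R. \<Sum>i=1..s. ennreal (\<nu> i) * (ennreal (P i r) * z r))"
    by (rule sum.swap)
  also have "\<dots> = (\<Sum>r\<in>R. ennreal (\<Sum>i=1..s. \<nu> i * P i r) * z r)"
  proof (intro sum.cong refl)
    fix r assume "r \<in> R"
    then have r: "r \<in> {1..s}" using assms by blast
    have "(\<Sum>i=1..s. ennreal (\<nu> i) * (ennreal (P i r) * z r)) = (\<Sum>i=1..s. ennreal (\<nu> i * P i r)) * z r"
      unfolding sum_distrib_right
    proof (intro sum.cong refl)
      fix i assume "i \<in> {1..s}"
      then show "ennreal (\<nu> i) * (ennreal (P i r) * z r) = ennreal (\<nu> i * P i r) * z r"
        using nu_nonneg P_nonneg[OF _ r] by (simp add: ennreal_mult mult.assoc)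
    qed
    also have "\<dots> = ennreal (\<Sum>i=1..s. \<nu> i * P i r) * z r"
      using r by (subst sum_ennreal) (auto intro!: mult_nonneg_nonneg nu_nonneg[rule_format] P_nonneg)
    finally show "(\<Sum>i=1..s. ennreal (\<nu> i) * (ennreal (P i r) * z r)) = ennreal (\<Sum>i=1..s. \<nu> i * P i r) * z r" .
  qed
  also have "\<dots> = (\<Sum>r\<in>R. ennreal (\<nu> r) * z r)"
    using assms stationary by (intro sum.cong refl) auto
  finally show ?thesis .
qed

text \<open>Kac's formula for the system solved by a first-passage quantity: multiplying by \<open>\<nu>\<close> and
  summing, stationarity turns the right-hand sum into \<open>\<Sum>r\<noteq>j. \<nu> r * x r\<close>, which cancels once it is
  known to be finite; finiteness spreads from \<open>x j\<close> to all states since \<open>P a b * x b \<le> x a\<close>.\<close>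

lemma kac_equation:
  fixes x c :: "nat \<Rightarrow> ennreal"
  assumes j: "j \<in> {1..s}"
    and x_eq: "\<And>i. i \<in> {1..s} \<Longrightarrow> x i = c i + (\<Sum>r\<in>{1..s}-{j}. ennreal (P i r) * x r)"
    and x_finite: "(\<Sum>i=1..s. ennreal (\<nu> i) * c i) < \<top> \<Longrightarrow> x j < \<top>"
  shows "ennreal (\<nu> j) * x j = (\<Sum>i=1..s. ennreal (\<nu> i) * c i)"
proof -
  define C where "C = (\<Sum>i=1..s. ennreal (\<nu> i) * c i)"
  define X where "X = (\<Sum>r\<in>{1..s}-{j}. ennreal (\<nu> r) * x r)"
  have "ennreal (\<nu> j) * x j + X = (\<Sum>i=1..s. ennreal (\<nu> i) * x i)"
    unfolding X_def using j by (simp add: sum.remove)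
  also have "\<dots> = (\<Sum>i=1..s. ennreal (\<nu> i) * c i + ennreal (\<nu> i) * (\<Sum>r\<in>{1..s}-{j}. ennreal (P i r) * x r))"
    by (intro sum.cong refl) (simp add: x_eq distrib_left)
  also have "\<dots> = C + X"
    unfolding C_def X_def sum.distrib by (subst sum_stationary_weighted) auto
  finally have sum_eq: "ennreal (\<nu> j) * x j + X = C + X" .
  show ?thesis
  proof (cases "x j < \<top>")
    case True
    have x_finite_all: "x b < \<top>" if "b \<in> {1..s}" for b
    proof (rule reachable_avoiding_induct[where Pr="\<lambda>b. x b < \<top>", OF j True _ that])
      fix a b assume a: "a \<in> {1..s}" and xa: "x a < \<top>" and b: "b \<in> {1..s} - {j}" and p: "0 < P a b"
      have "ennreal (P a b) * x b \<le> (\<Sum>r\<in>{1..s}-{j}. ennreal (P a r) * x r)"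
        using b by (intro member_le_sum) auto
      also have "\<dots> \<le> x a" using x_eq[OF a] by simp
      finally have "ennreal (P a b) * x b < \<top>" using xa by (simp add: le_less_trans)
      then show "x b < \<top>" using p by (auto simp: ennreal_mult_less_top)
    qed
    have "X < \<top>" unfolding X_def using x_finite_all by (auto simp: ennreal_mult_less_top)
    then show ?thesis using sum_eq unfolding C_def
      by (metis add.commute ennreal_add_left_cancel infinity_ennreal_def less_irrefl)
  next
    case False
    then have "x j = \<top>" "C = \<top>" using x_finite top.not_eq_extremum unfolding C_def by blast+
    then have "ennreal (\<nu> j) * x j = C" using nu_pos[OF j] by (simp add: ennreal_mult_top)
    then show ?thesis unfolding C_def .
  qed
qed

lemma kac_inequality:
  fixes x y c :: "nat \<Rightarrow> ennreal"
  assumes j: "j \<in> {1..s}"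
    and x_le: "\<And>i. i \<in> {1..s} \<Longrightarrow> x i \<le> c i + (\<Sum>r\<in>{1..s}-{j}. ennreal (P i r) * y r)"
    and y_le_x: "\<And>r. y r \<le> x r" and x_finite: "\<And>r. r \<in> {1..s} \<Longrightarrow> x r < \<top>"
  shows "ennreal (\<nu> j) * x j \<le> (\<Sum>i=1..s. ennreal (\<nu> i) * c i)"
proof -
  define C where "C = (\<Sum>i=1..s. ennreal (\<nu> i) * c i)"
  define X where "X = (\<Sum>r\<in>{1..s}-{j}. ennreal (\<nu> r) * x r)"
  have "ennreal (\<nu> j) * x j + X = (\<Sum>i=1..s. ennreal (\<nu> i) * x i)"
    unfolding X_def using j by (simp add: sum.remove)
  also have "\<dots> \<le> (\<Sum>i=1..s. ennreal (\<nu> i) * c i + ennreal (\<nu> i) * (\<Sum>r\<in>{1..s}-{j}. ennreal (P i r) * y r))"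
    unfolding distrib_left[symmetric] by (intro sum_mono mult_left_mono x_le) auto
  also have "\<dots> = C + (\<Sum>r\<in>{1..s}-{j}. ennreal (\<nu> r) * y r)"
    unfolding C_def sum.distrib by (subst sum_stationary_weighted) auto
  also have "\<dots> \<le> C + X"
    unfolding X_def by (intro add_left_mono sum_mono mult_left_mono y_le_x) auto
  finally have "X + ennreal (\<nu> j) * x j \<le> X + C" by (simp only: add.commute)
  moreover have "X < \<top>" unfolding X_def using x_finite by (auto simp: ennreal_mult_less_top)
  ultimately have "ennreal (\<nu> j) * x j \<le> C"
    by (metis ennreal_add_left_cancel_le infinity_ennreal_def less_irrefl)
  then show ?thesis unfolding C_def .
qed

lemma kac_iterates_bounded:
  fixes y :: "nat \<Rightarrow> nat \<Rightarrow> ennreal" and c :: "nat \<Rightarrow> ennreal"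
  assumes j: "j \<in> {1..s}" and y_0: "\<And>i. y 0 i = 0"
    and y_Suc: "\<And>N i. i \<in> {1..s} \<Longrightarrow> y (Suc N) i \<le> c i + (\<Sum>r\<in>{1..s}-{j}. ennreal (P i r) * y N r)"
    and y_mono: "\<And>N i. y N i \<le> y (Suc N) i"
    and C_finite: "(\<Sum>i=1..s. ennreal (\<nu> i) * c i) < \<top>"
  shows "(SUP N. y N j) < \<top>"
proof -
  have c_finite: "c i < \<top>" if i: "i \<in> {1..s}" for i
  proof -
    have "ennreal (\<nu> i) * c i \<le> (\<Sum>i=1..s. ennreal (\<nu> i) * c i)"
      using i by (intro member_le_sum) auto
    then have "ennreal (\<nu> i) * c i < \<top>" using C_finite by (simp add: le_less_trans)
    then show ?thesis using nu_pos[OF i] by (auto simp: ennreal_mult_less_top)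
  qed
  have y_finite: "\<forall>i\<in>{1..s}. y N i < \<top>" for N
  proof (induction N)
    case 0
    then show ?case by (simp add: y_0)
  next
    case (Suc N)
    show ?case
    proof
      fix i assume i: "i \<in> {1..s}"
      have "c i + (\<Sum>r\<in>{1..s}-{j}. ennreal (P i r) * y N r) < \<top>"
        using Suc c_finite[OF i] by (auto simp: ennreal_mult_less_top)
      then show "y (Suc N) i < \<top>" using y_Suc[OF i, of N] by (simp add: le_less_trans)
    qed
  qed
  have bound: "ennreal (\<nu> j) * y N j \<le> (\<Sum>i=1..s. ennreal (\<nu> i) * c i)" for N
  proof (cases N)
    case 0
    then show ?thesis by (simp add: y_0)
  next
    case (Suc N')
    show ?thesis unfolding Suc
      by (rule kac_inequality[where x="y (Suc N')" and y="y N'", OF j y_Suc y_mono y_finite[rule_format]])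
  qed
  have "ennreal (\<nu> j) * (SUP N. y N j) = (SUP N. ennreal (\<nu> j) * y N j)"
    by (rule SUP_mult_left_ennreal)
  also have "\<dots> \<le> (\<Sum>i=1..s. ennreal (\<nu> i) * c i)" by (intro SUP_least bound)
  finally have "ennreal (\<nu> j) * (SUP N. y N j) < \<top>" using C_finite by (simp add: le_less_trans)
  then show ?thesis using nu_pos[OF j] by (auto simp: ennreal_mult_less_top)
qed

end

section \<open>The law of the history\<close>

locale markov_renewal_chain =
  fixes s :: nat and q :: "nat \<Rightarrow> nat \<Rightarrow> ('d::finite \<Rightarrow> nat) \<Rightarrow> real"
    and M :: "nat \<Rightarrow> 'w measure" and J :: "nat \<Rightarrow> 'w \<Rightarrow> nat" and S :: "nat \<Rightarrow> 'w \<Rightarrow> ('d \<Rightarrow> nat)"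
  assumes chain: "mtmrc s q M J S"
begin

lemma J_in_states: "J n \<omega> \<in> {1..s}"
  using chain unfolding mtmrc_def by blast

lemma S_0: "S 0 \<omega> u = 0"
  using chain unfolding mtmrc_def by blast

lemma S_less_Suc: "S n \<omega> < S (Suc n) \<omega>"
  using chain unfolding mtmrc_def by blast

lemma S_le_Suc: "S n \<omega> u \<le> S (Suc n) \<omega> u"
  using S_less_Suc[of n \<omega>] by (simp add: less_fun_def le_fun_def)

lemma prob_space_M: "i \<in> {1..s} \<Longrightarrow> prob_space (M i)"
  using chain unfolding mtmrc_def by blast

lemma measurable_J: "i \<in> {1..s} \<Longrightarrow> J n \<in> measurable (M i) (count_space UNIV)"
  using chain unfolding mtmrc_def by blast

lemma measurable_S: "i \<in> {1..s} \<Longrightarrow> S n \<in> measurable (M i) (count_space UNIV)"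
  using chain unfolding mtmrc_def by blast

lemma AE_J_0: "i \<in> {1..s} \<Longrightarrow> AE \<omega> in M i. J 0 \<omega> = i"
  using chain unfolding mtmrc_def by blast

lemma measure_step:
  "i \<in> {1..s} \<Longrightarrow>
    measure (M i) {\<omega> \<in> space (M i). (\<forall>l\<le>n. J l \<omega> = js l \<and> S l \<omega> = ss l) \<and>
      J (Suc n) \<omega> = j \<and> (\<forall>u. S (Suc n) \<omega> u = S n \<omega> u + k u)}
    = q (js n) j k * measure (M i) {\<omega> \<in> space (M i). \<forall>l\<le>n. J l \<omega> = js l \<and> S l \<omega> = ss l}"
  using chain unfolding mtmrc_def by blast

lemma prob_J_0:
  assumes i: "i \<in> {1..s}"
  shows "measure (M i) {\<omega> \<in> space (M i). J 0 \<omega> = i} = 1"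
proof -
  interpret prob_space "M i" using prob_space_M[OF i] .
  have [measurable]: "J 0 \<in> measurable (M i) (count_space UNIV)" using measurable_J[OF i] .
  show ?thesis using AE_J_0[OF i] by (intro prob_Collect_eq_1[THEN iffD2]) auto
qed

lemma emeasure_M_eq_measure:
  assumes i: "i \<in> {1..s}"
  shows "emeasure (M i) A = ennreal (measure (M i) A)"
proof -
  interpret prob_space "M i" using prob_space_M[OF i] .
  show ?thesis by (rule emeasure_eq_measure)
qed

definition increment :: "nat \<Rightarrow> 'w \<Rightarrow> ('d \<Rightarrow> nat)" where
  "increment n \<omega> = (\<lambda>u. S (Suc n) \<omega> u - S n \<omega> u)"

definition history :: "nat \<Rightarrow> 'w \<Rightarrow> (nat \<times> ('d \<Rightarrow> nat)) list" where
  "history n \<omega> = map (\<lambda>l. (J (Suc l) \<omega>, increment l \<omega>)) [0..<n]"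

lemma S_eq_sum_increment: "S l \<omega> u = (\<Sum>m<l. increment m \<omega> u)"
proof (induction l)
  case 0
  then show ?case by (simp add: S_0)
next
  case (Suc l)
  then show ?case using S_le_Suc[of l \<omega> u] by (simp add: increment_def)
qed

lemma history_Suc: "history (Suc n) \<omega> = history n \<omega> @ [(J (Suc n) \<omega>, increment n \<omega>)]"
  by (simp add: history_def)

lemma length_history [simp]: "length (history n \<omega>) = n"
  by (simp add: history_def)

lemma increment_eq_iff: "increment n \<omega> = k \<longleftrightarrow> (\<forall>u. S (Suc n) \<omega> u = S n \<omega> u + k u)"
  using S_le_Suc[of n \<omega>] unfolding increment_def fun_eq_iff
  by (metis add_diff_cancel_left' le_add_diff_inverse)

lemma history_eq_iff:
  assumes "J 0 \<omega> = J 0 \<omega>'"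
  shows "history n \<omega> = history n \<omega>' \<longleftrightarrow> (\<forall>l\<le>n. J l \<omega> = J l \<omega>' \<and> S l \<omega> = S l \<omega>')"
proof
  assume h: "history n \<omega> = history n \<omega>'"
  have step: "J (Suc l) \<omega> = J (Suc l) \<omega>' \<and> increment l \<omega> = increment l \<omega>'" if "l < n" for l
    using arg_cong[OF h, of "\<lambda>xs. xs ! l"] that by (simp add: history_def)
  show "\<forall>l\<le>n. J l \<omega> = J l \<omega>' \<and> S l \<omega> = S l \<omega>'"
  proof (intro allI impI conjI)
    fix l assume "l \<le> n"
    then show "J l \<omega> = J l \<omega>'" using step assms by (cases l) auto
    show "S l \<omega> = S l \<omega>'"
      using \<open>l \<le> n\<close> step unfolding fun_eq_iff
      by (subst (1 2) S_eq_sum_increment) (auto intro!: sum.cong)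
  qed
next
  assume "\<forall>l\<le>n. J l \<omega> = J l \<omega>' \<and> S l \<omega> = S l \<omega>'"
  then show "history n \<omega> = history n \<omega>'"
    unfolding history_def increment_def by (auto intro!: map_cong)
qed

lemma measurable_increment: "i \<in> {1..s} \<Longrightarrow> increment n \<in> measurable (M i) (count_space UNIV)"
  unfolding increment_def by (rule measurable_count_space_apply2[OF measurable_S measurable_S])

lemma measurable_history: "i \<in> {1..s} \<Longrightarrow> history n \<in> measurable (M i) (count_space UNIV)"
proof (induction n)
  case 0
  then show ?case by (simp add: history_def)
next
  case (Suc n)
  have "(\<lambda>\<omega>. history n \<omega> @ [(J (Suc n) \<omega>, increment n \<omega>)]) \<in> measurable (M i) (count_space UNIV)"
    by (rule measurable_count_space_apply2[OF Suc.IH[OF Suc.prems]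
          measurable_count_space_apply2[OF measurable_J[OF Suc.prems] measurable_increment[OF Suc.prems]]])
  then show ?case by (simp add: history_Suc)
qed

lemma measure_first_step:
  assumes i: "i \<in> {1..s}"
  shows "measure (M i) {\<omega> \<in> space (M i). J 0 \<omega> = i \<and> J 1 \<omega> = r \<and> increment 0 \<omega> = k} = q i r k"
proof -
  have S_0': "S 0 \<omega> = (\<lambda>_. 0)" for \<omega> by (simp add: fun_eq_iff S_0)
  have "{\<omega> \<in> space (M i). J 0 \<omega> = i \<and> J 1 \<omega> = r \<and> increment 0 \<omega> = k}
      = {\<omega> \<in> space (M i). (\<forall>l\<le>0. J l \<omega> = i \<and> S l \<omega> = (\<lambda>_. 0)) \<and>
          J (Suc 0) \<omega> = r \<and> (\<forall>u. S (Suc 0) \<omega> u = S 0 \<omega> u + k u)}"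
    by (auto simp: S_0' increment_eq_iff)
  moreover have "{\<omega> \<in> space (M i). \<forall>l\<le>0. J l \<omega> = i \<and> S l \<omega> = (\<lambda>_. 0)} = {\<omega> \<in> space (M i). J 0 \<omega> = i}"
    by (auto simp: S_0')
  ultimately show ?thesis
    using measure_step[OF i, of 0 "\<lambda>_. i" "\<lambda>_ _. 0" r k] prob_J_0[OF i] by simp
qed

lemma q_nonneg: "i \<in> {1..s} \<Longrightarrow> 0 \<le> q i r k"
  using measure_first_step[of i r k] by (metis measure_nonneg)

lemma q_eq_0_outside:
  assumes "i \<in> {1..s}" and "r \<notin> {1..s}"
  shows "q i r k = 0"
proof -
  have "{\<omega> \<in> space (M i). J 0 \<omega> = i \<and> J 1 \<omega> = r \<and> increment 0 \<omega> = k} = {}"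
    using J_in_states[of 1] assms(2) by blast
  then show ?thesis using measure_first_step[OF assms(1), of r k] by (metis measure_empty)
qed

fun path_prob :: "nat \<Rightarrow> (nat \<times> ('d \<Rightarrow> nat)) list \<Rightarrow> ennreal" where
  "path_prob i [] = 1"
| "path_prob i ((r, k) # ys) = ennreal (q i r k) * path_prob r ys"

definition last_state :: "nat \<Rightarrow> (nat \<times> ('d \<Rightarrow> nat)) list \<Rightarrow> nat" where
  "last_state i xs = (if xs = [] then i else fst (last xs))"

lemma path_prob_snoc: "path_prob i (xs @ [(r, k)]) = path_prob i xs * ennreal (q (last_state i xs) r k)"
  by (induction xs arbitrary: i) (auto simp: last_state_def mult.assoc)

definition history_set :: "nat \<Rightarrow> nat \<Rightarrow> (nat \<times> ('d \<Rightarrow> nat)) list \<Rightarrow> 'w set" where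
  "history_set i n xs = {\<omega> \<in> space (M i). J 0 \<omega> = i \<and> history n \<omega> = xs}"

lemma sets_history_set:
  assumes i: "i \<in> {1..s}"
  shows "history_set i n xs \<in> sets (M i)"
proof -
  have "history_set i n xs = (\<lambda>\<omega>. (J 0 \<omega>, history n \<omega>)) -` {(i, xs)} \<inter> space (M i)"
    by (auto simp: history_set_def)
  also have "\<dots> \<in> sets (M i)"
    by (rule measurable_sets[OF measurable_count_space_apply2[OF measurable_J[OF i] measurable_history[OF i]]])
      simp
  finally show ?thesis .
qed

lemma history_set_eq_past:
  assumes \<omega>0: "\<omega>0 \<in> history_set i n xs"
  shows "history_set i n xs = {\<omega> \<in> space (M i). \<forall>l\<le>n. J l \<omega> = J l \<omega>0 \<and> S l \<omega> = S l \<omega>0}"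
proof (intro set_eqI iffI)
  have \<omega>0_i: "J 0 \<omega>0 = i" and \<omega>0_xs: "history n \<omega>0 = xs"
    using \<omega>0 by (auto simp: history_set_def)
  fix \<omega>
  show "\<omega> \<in> {\<omega> \<in> space (M i). \<forall>l\<le>n. J l \<omega> = J l \<omega>0 \<and> S l \<omega> = S l \<omega>0}"
    if "\<omega> \<in> history_set i n xs"
    using that history_eq_iff[of \<omega> \<omega>0 n] \<omega>0_i \<omega>0_xs by (auto simp: history_set_def)
  show "\<omega> \<in> history_set i n xs"
    if \<omega>: "\<omega> \<in> {\<omega> \<in> space (M i). \<forall>l\<le>n. J l \<omega> = J l \<omega>0 \<and> S l \<omega> = S l \<omega>0}"
  proof -
    have "J 0 \<omega> = i" using \<omega> \<omega>0_i by auto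
    then show ?thesis using \<omega> history_eq_iff[of \<omega> \<omega>0 n] \<omega>0_xs by (auto simp: history_set_def)
  qed
qed

lemma emeasure_history_set:
  assumes i: "i \<in> {1..s}"
  shows "length xs = n \<Longrightarrow> emeasure (M i) (history_set i n xs) = path_prob i xs"
proof (induction n arbitrary: xs)
  case 0
  then have "history_set i 0 xs = {\<omega> \<in> space (M i). J 0 \<omega> = i}"
    by (simp add: history_set_def history_def)
  then show ?case
    using 0 prob_J_0[OF i] by (simp add: emeasure_M_eq_measure[OF i])
next
  case (Suc n xs')
  then obtain xs r k where xs': "xs' = xs @ [(r, k)]" and len: "length xs = n"
    by (metis length_Suc_conv_rev prod.collapse)
  have Suc_set: "history_set i (Suc n) xs' = {\<omega> \<in> history_set i n xs. J (Suc n) \<omega> = r \<and> increment n \<omega> = k}"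
    unfolding history_set_def xs' by (auto simp: history_Suc)
  show ?case
  proof (cases "history_set i n xs = {}")
    case True
    then show ?thesis using Suc.IH[OF len] Suc_set xs' by (simp add: path_prob_snoc)
  next
    case False
    then obtain \<omega>0 where \<omega>0: "\<omega>0 \<in> history_set i n xs" by blast
    then have \<omega>0_i: "J 0 \<omega>0 = i" and \<omega>0_xs: "history n \<omega>0 = xs"
      by (auto simp: history_set_def)
    have set_n: "history_set i n xs = {\<omega> \<in> space (M i). \<forall>l\<le>n. J l \<omega> = J l \<omega>0 \<and> S l \<omega> = S l \<omega>0}"
      using \<omega>0 by (rule history_set_eq_past)
    have "history_set i (Suc n) xs' = {\<omega> \<in> space (M i). (\<forall>l\<le>n. J l \<omega> = J l \<omega>0 \<and> S l \<omega> = S l \<omega>0) \<and>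
        J (Suc n) \<omega> = r \<and> (\<forall>u. S (Suc n) \<omega> u = S n \<omega> u + k u)}"
      unfolding Suc_set set_n by (auto simp: increment_eq_iff)
    then have "measure (M i) (history_set i (Suc n) xs') = q (J n \<omega>0) r k * measure (M i) (history_set i n xs)"
      unfolding set_n by (simp only: measure_step[OF i])
    moreover have "last_state i xs = J n \<omega>0"
      using len \<omega>0_i \<omega>0_xs by (cases n) (auto simp: last_state_def history_Suc)
    ultimately show ?thesis
      using Suc.IH[OF len] xs' q_nonneg[OF J_in_states]
      by (simp add: emeasure_M_eq_measure[OF i] ennreal_mult path_prob_snoc mult.commute)
  qed
qed

lemma nn_integral_history:
  fixes F :: "(nat \<times> ('d \<Rightarrow> nat)) list \<Rightarrow> ennreal"
  assumes i: "i \<in> {1..s}"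
  shows "(\<integral>\<^sup>+\<omega>. F (history n \<omega>) \<partial>M i) = (\<integral>\<^sup>+xs. F xs * path_prob i xs \<partial>count_space {xs. length xs = n})"
proof -
  have [measurable]: "J 0 \<in> measurable (M i) (count_space UNIV)" using measurable_J[OF i] .
  have "(\<integral>\<^sup>+\<omega>. F (history n \<omega>) \<partial>M i) = (\<integral>\<^sup>+\<omega>. F (history n \<omega>) * indicator {\<omega>. J 0 \<omega> = i} \<omega> \<partial>M i)"
    using AE_J_0[OF i] by (intro nn_integral_cong_AE) (auto split: split_indicator)
  also have "\<dots> = (\<integral>\<^sup>+\<omega>. \<integral>\<^sup>+xs. F xs * indicator (history_set i n xs) \<omega> \<partial>count_space {xs. length xs = n} \<partial>M i)"
  proof (intro nn_integral_cong)
    fix \<omega> assume \<omega>: "\<omega> \<in> space (M i)"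
    show "F (history n \<omega>) * indicator {\<omega>. J 0 \<omega> = i} \<omega> =
      (\<integral>\<^sup>+xs. F xs * indicator (history_set i n xs) \<omega> \<partial>count_space {xs. length xs = n})"
    proof (cases "J 0 \<omega> = i")
      case True
      then have "(\<integral>\<^sup>+xs. F xs * indicator (history_set i n xs) \<omega> \<partial>count_space {xs. length xs = n})
          = (\<Sum>xs\<in>{history n \<omega>}. F xs * indicator (history_set i n xs) \<omega>)"
        using \<omega> by (intro nn_integral_count_space') (auto simp: history_set_def)
      then show ?thesis using True \<omega> by (simp add: history_set_def)
    next
      case False
      then show ?thesis by (simp add: history_set_def)
    qed
  qed
  also have "\<dots> = (\<integral>\<^sup>+xs. \<integral>\<^sup>+\<omega>. F xs * indicator (history_set i n xs) \<omega> \<partial>M i \<partial>count_space {xs. length xs = n})"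
    using sets_history_set[OF i] by (intro nn_integral_count_space_nn_integral) auto
  also have "\<dots> = (\<integral>\<^sup>+xs. F xs * path_prob i xs \<partial>count_space {xs. length xs = n})"
    by (intro nn_integral_cong)
      (simp add: nn_integral_cmult_indicator sets_history_set[OF i] emeasure_history_set[OF i])
  finally show ?thesis .
qed


section \<open>First-hitting functionals\<close>

definition hits_first_at_end :: "nat \<Rightarrow> (nat \<times> ('d \<Rightarrow> nat)) list \<Rightarrow> bool" where
  "hits_first_at_end j xs \<longleftrightarrow> xs \<noteq> [] \<and> fst (last xs) = j \<and> (\<forall>x\<in>set (butlast xs). fst x \<noteq> j)"

definition total_increment :: "(nat \<times> ('d \<Rightarrow> nat)) list \<Rightarrow> ('d \<Rightarrow> nat)" where
  "total_increment xs = (\<lambda>u. sum_list (map (\<lambda>x. snd x u) xs))"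

definition hit_payoff :: "nat \<Rightarrow> (('d \<Rightarrow> nat) \<Rightarrow> ennreal) \<Rightarrow> (nat \<times> ('d \<Rightarrow> nat)) list \<Rightarrow> ennreal" where
  "hit_payoff j g xs = (if hits_first_at_end j xs then g (total_increment xs) else 0)"

text \<open>\<open>hit_at j i n g\<close> is \<open>E_i[g(T_j); m_j = n]\<close>, computed on the law of the history
  (see \<open>hit_at_eq_nn_integral\<close>), where the first step can be split off.\<close>

definition hit_at :: "nat \<Rightarrow> nat \<Rightarrow> nat \<Rightarrow> (('d \<Rightarrow> nat) \<Rightarrow> ennreal) \<Rightarrow> ennreal" where
  "hit_at j i n g = (\<integral>\<^sup>+xs. hit_payoff j g xs * path_prob i xs \<partial>count_space {xs. length xs = n})"

definition kernel_int :: "nat \<Rightarrow> nat \<Rightarrow> (('d \<Rightarrow> nat) \<Rightarrow> ennreal) \<Rightarrow> ennreal" where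
  "kernel_int i r g = (\<integral>\<^sup>+k. ennreal (q i r k) * g k \<partial>count_space UNIV)"

lemma hit_at_0 [simp]: "hit_at j i 0 g = 0"
proof -
  have "{xs. length xs = 0} = {[]}" by auto
  then show ?thesis
    by (simp add: hit_at_def nn_integral_count_space_finite hit_payoff_def hits_first_at_end_def)
qed

lemma hit_payoff_Cons:
  "hit_payoff j g ((r, k) # ys) =
    (if ys = [] then (if r = j then g k else 0)
     else if r = j then 0 else hit_payoff j (\<lambda>t. g (\<lambda>u. k u + t u)) ys)"
  by (auto simp: hit_payoff_def hits_first_at_end_def total_increment_def)

lemma kernel_int_eq_0_outside: "i \<in> {1..s} \<Longrightarrow> r \<notin> {1..s} \<Longrightarrow> kernel_int i r g = 0"
  unfolding kernel_int_def using q_eq_0_outside by simp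

lemma kernel_int_add: "kernel_int i r (\<lambda>t. a t + b t) = kernel_int i r a + kernel_int i r b"
  unfolding kernel_int_def
  by (subst nn_integral_add[symmetric]) (auto intro!: nn_integral_cong simp: distrib_left)

lemma kernel_int_mult_const: "kernel_int i r (\<lambda>t. a t * c) = kernel_int i r a * c"
  unfolding kernel_int_def
  by (subst nn_integral_multc[symmetric]) (auto intro!: nn_integral_cong simp: mult_ac)

lemma kernel_int_mono: "(\<And>t. a t \<le> b t) \<Longrightarrow> kernel_int i r a \<le> kernel_int i r b"
  unfolding kernel_int_def by (intro nn_integral_mono mult_left_mono) auto

lemma nn_integral_first_jump:
  "(\<integral>\<^sup>+k. \<integral>\<^sup>+ys. hit_payoff j g ((r, k) # ys) * path_prob i ((r, k) # ys)
      \<partial>count_space {ys. length ys = n} \<partial>count_space UNIV)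
    = (if n = 0 then (if r = j then kernel_int i j g else 0)
       else if r = j then 0 else kernel_int i r (\<lambda>k. hit_at j r n (\<lambda>t. g (\<lambda>u. k u + t u))))"
proof (cases "n = 0")
  case True
  then have "{ys. length ys = n} = {[]}" by auto
  then show ?thesis
    using True by (simp add: nn_integral_count_space_finite hit_payoff_Cons kernel_int_def mult.commute)
next
  case n_pos: False
  have "(\<integral>\<^sup>+ys. hit_payoff j g ((r, k) # ys) * path_prob i ((r, k) # ys) \<partial>count_space {ys. length ys = n})
      = (if r = j then 0 else ennreal (q i r k) * hit_at j r n (\<lambda>t. g (\<lambda>u. k u + t u)))" for k
  proof (cases "r = j")
    case True
    then show ?thesis using n_pos
      by (subst nn_integral_cong[where v="\<lambda>_. 0"]) (auto simp: hit_payoff_Cons)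
  next
    case False
    then show ?thesis unfolding hit_at_def using n_pos
      by (subst nn_integral_cmult[symmetric]) (auto intro!: nn_integral_cong simp: hit_payoff_Cons mult_ac)
  qed
  then show ?thesis using n_pos by (simp add: kernel_int_def)
qed

text \<open>First-step decomposition: after a first jump to \<open>r \<noteq> j\<close> with increment \<open>k\<close>, the
  remaining path is a path from \<open>r\<close> that has to hit \<open>j\<close> one step earlier, with \<open>g\<close> shifted by \<open>k\<close>.\<close>

lemma hit_at_Suc:
  assumes i: "i \<in> {1..s}"
  shows "hit_at j i (Suc n) g = (if n = 0 then kernel_int i j g else 0) +
     (\<Sum>r\<in>{1..s}-{j}. kernel_int i r (\<lambda>k. hit_at j r n (\<lambda>t. g (\<lambda>u. k u + t u))))"
proof -
  have "hit_at j i (Suc n) g = (\<integral>\<^sup>+x. \<integral>\<^sup>+ys. hit_payoff j g (x # ys) * path_prob i (x # ys)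
      \<partial>count_space {ys. length ys = n} \<partial>count_space UNIV)"
    unfolding hit_at_def by (rule nn_integral_count_space_length_Suc)
  also have "\<dots> = (\<integral>\<^sup>+r. \<integral>\<^sup>+k. \<integral>\<^sup>+ys. hit_payoff j g ((r, k) # ys) * path_prob i ((r, k) # ys)
      \<partial>count_space {ys. length ys = n} \<partial>count_space UNIV \<partial>count_space UNIV)"
    by (rule nn_integral_fst_count_space[symmetric])
  also have "\<dots> = (\<Sum>r\<in>{1..s}. (if n = 0 then (if r = j then kernel_int i j g else 0)
      else if r = j then 0 else kernel_int i r (\<lambda>k. hit_at j r n (\<lambda>t. g (\<lambda>u. k u + t u)))))"
    unfolding nn_integral_first_jump
    by (intro nn_integral_count_space') (auto simp: kernel_int_eq_0_outside[OF i])
  also have "\<dots> = (if n = 0 then kernel_int i j g else 0) +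
     (\<Sum>r\<in>{1..s}-{j}. kernel_int i r (\<lambda>k. hit_at j r n (\<lambda>t. g (\<lambda>u. k u + t u))))"
  proof (cases "n = 0")
    case True
    then show ?thesis
      using kernel_int_eq_0_outside[OF i, of j g] by (simp add: sum.delta kernel_int_def)
  next
    case False
    have "(\<Sum>r=1..s. if r = j then 0 else kernel_int i r (\<lambda>k. hit_at j r n (\<lambda>t. g (\<lambda>u. k u + t u))))
        = (\<Sum>r\<in>{1..s}-{j}. kernel_int i r (\<lambda>k. hit_at j r n (\<lambda>t. g (\<lambda>u. k u + t u))))"
      by (rule sum.mono_neutral_cong_right) auto
    then show ?thesis using False by simp
  qed
  finally show ?thesis .
qed

lemma hit_at_add: "hit_at j i n (\<lambda>t. a t + b t) = hit_at j i n a + hit_at j i n b"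
  unfolding hit_at_def
  by (subst nn_integral_add[symmetric]) (auto intro!: nn_integral_cong simp: hit_payoff_def distrib_right)

lemma hit_at_mult_const: "hit_at j i n (\<lambda>t. c * a t) = c * hit_at j i n a"
  unfolding hit_at_def
  by (subst nn_integral_cmult[symmetric]) (auto intro!: nn_integral_cong simp: hit_payoff_def mult_ac)

definition first_hit_set :: "nat \<Rightarrow> nat \<Rightarrow> 'w set" where
  "first_hit_set j n = {\<omega>. 1 \<le> n \<and> J n \<omega> = j \<and> (\<forall>l. 1 \<le> l \<longrightarrow> l < n \<longrightarrow> J l \<omega> \<noteq> j)}"

definition returns :: "nat \<Rightarrow> 'w set" where
  "returns j = {\<omega>. \<exists>l\<ge>1. J l \<omega> = j}"

lemma total_increment_history: "total_increment (history n \<omega>) = S n \<omega>"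
  unfolding total_increment_def history_def fun_eq_iff
  by (simp add: S_eq_sum_increment interv_sum_list_conv_sum_set_nat atLeast0LessThan comp_def)

lemma hits_first_at_end_history: "hits_first_at_end j (history n \<omega>) \<longleftrightarrow> \<omega> \<in> first_hit_set j n"
proof (cases n)
  case 0
  then show ?thesis by (simp add: hits_first_at_end_def first_hit_set_def history_def)
next
  case (Suc m)
  have "(\<forall>x\<in>set (history m \<omega>). fst x \<noteq> j) \<longleftrightarrow> (\<forall>l. 1 \<le> l \<longrightarrow> l < Suc m \<longrightarrow> J l \<omega> \<noteq> j)"
  proof
    assume "\<forall>x\<in>set (history m \<omega>). fst x \<noteq> j"
    then show "\<forall>l. 1 \<le> l \<longrightarrow> l < Suc m \<longrightarrow> J l \<omega> \<noteq> j"
      by (auto simp: history_def dest!: Suc_le_D)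
  qed (auto simp: history_def)
  then show ?thesis using Suc by (simp add: hits_first_at_end_def first_hit_set_def history_Suc)
qed

lemma hit_payoff_history: "hit_payoff j g (history n \<omega>) = g (S n \<omega>) * indicator (first_hit_set j n) \<omega>"
  by (simp add: hit_payoff_def hits_first_at_end_history total_increment_history split: split_indicator)

lemma hit_at_eq_nn_integral:
  assumes i: "i \<in> {1..s}"
  shows "hit_at j i n g = (\<integral>\<^sup>+\<omega>. g (S n \<omega>) * indicator (first_hit_set j n) \<omega> \<partial>M i)"
  unfolding hit_at_def nn_integral_history[OF i, symmetric] hit_payoff_history ..

lemma first_hit_set_iff: "\<omega> \<in> first_hit_set j n \<longleftrightarrow> \<omega> \<in> returns j \<and> n = firstret J j \<omega>"
proof
  assume \<omega>: "\<omega> \<in> first_hit_set j n"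
  have "firstret J j \<omega> = n" unfolding firstret_def
    by (rule Least_equality) (use \<omega> in \<open>auto simp: first_hit_set_def not_less[symmetric]\<close>)
  then show "\<omega> \<in> returns j \<and> n = firstret J j \<omega>" using \<omega> by (auto simp: first_hit_set_def returns_def)
next
  assume \<omega>: "\<omega> \<in> returns j \<and> n = firstret J j \<omega>"
  then have "\<exists>l. l \<ge> 1 \<and> J l \<omega> = j" by (auto simp: returns_def)
  then have "firstret J j \<omega> \<ge> 1 \<and> J (firstret J j \<omega>) \<omega> = j"
    unfolding firstret_def by (rule LeastI_ex)
  moreover have "J l \<omega> \<noteq> j" if "1 \<le> l" "l < firstret J j \<omega>" for l
    using not_less_Least[of l "\<lambda>l. l \<ge> 1 \<and> J l \<omega> = j"] that unfolding firstret_def by auto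
  ultimately show "\<omega> \<in> first_hit_set j n" using \<omega> by (auto simp: first_hit_set_def)
qed

definition hit_exp :: "nat \<Rightarrow> nat \<Rightarrow> (('d \<Rightarrow> nat) \<Rightarrow> ennreal) \<Rightarrow> ennreal" where
  "hit_exp j i g = (\<Sum>n. hit_at j i n g)"

definition hit_exp_trunc :: "nat \<Rightarrow> nat \<Rightarrow> nat \<Rightarrow> (('d \<Rightarrow> nat) \<Rightarrow> ennreal) \<Rightarrow> ennreal" where
  "hit_exp_trunc j N i g = (\<Sum>n<N. hit_at j i n g)"

lemma sets_returns: "i \<in> {1..s} \<Longrightarrow> returns j \<inter> space (M i) \<in> sets (M i)"
proof -
  assume i: "i \<in> {1..s}"
  have [measurable]: "J n \<in> measurable (M i) (count_space UNIV)" for n using measurable_J[OF i] .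
  have "returns j \<inter> space (M i) = {\<omega> \<in> space (M i). \<exists>l\<in>{1..}. J l \<omega> = j}" by (auto simp: returns_def)
  also have "\<dots> \<in> sets (M i)" by measurable
  finally show ?thesis .
qed

lemma sets_first_hit_set:
  assumes i: "i \<in> {1..s}"
  shows "first_hit_set j n \<inter> space (M i) \<in> sets (M i)"
proof -
  have [measurable]: "J n \<in> measurable (M i) (count_space UNIV)" for n using measurable_J[OF i] .
  have "first_hit_set j n \<inter> space (M i)
      = {\<omega> \<in> space (M i). 1 \<le> n \<and> J n \<omega> = j \<and> (\<forall>l\<in>{1..<n}. J l \<omega> \<noteq> j)}"
    by (auto simp: first_hit_set_def)
  also have "\<dots> \<in> sets (M i)" by measurable
  finally show ?thesis .
qed

lemma Tret_indicator_returns_eq_suminf: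
  fixes g :: "('d \<Rightarrow> nat) \<Rightarrow> ennreal"
  shows "g (Tret J S j \<omega>) * indicator (returns j) \<omega> = (\<Sum>n. g (S n \<omega>) * indicator (first_hit_set j n) \<omega>)"
proof (cases "\<omega> \<in> returns j")
  case True
  then have "(\<lambda>n. g (S n \<omega>) * indicator (first_hit_set j n) \<omega>) = (\<lambda>n. if n = firstret J j \<omega> then g (S n \<omega>) else 0)"
    by (auto simp: first_hit_set_iff fun_eq_iff split: split_indicator)
  then show ?thesis using True sums_single[of "firstret J j \<omega>" "\<lambda>n. g (S n \<omega>)"]
    by (simp add: sums_iff Tret_def)
next
  case False
  then show ?thesis by (simp add: first_hit_set_iff)
qed

lemma nn_integral_Tret_returns:
  assumes i: "i \<in> {1..s}"
  shows "(\<integral>\<^sup>+\<omega>. g (Tret J S j \<omega>) * indicator (returns j) \<omega> \<partial>M i) = hit_exp j i g"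
proof -
  have g_S: "(\<lambda>\<omega>. g (S n \<omega>)) \<in> borel_measurable (M i)" for n
    using measurable_compose[OF measurable_S[OF i], of g borel] by simp
  have "(\<integral>\<^sup>+\<omega>. g (Tret J S j \<omega>) * indicator (returns j) \<omega> \<partial>M i)
      = (\<integral>\<^sup>+\<omega>. (\<Sum>n. g (S n \<omega>) * indicator (first_hit_set j n \<inter> space (M i)) \<omega>) \<partial>M i)"
    by (intro nn_integral_cong) (simp add: Tret_indicator_returns_eq_suminf[of g] indicator_inter_arith)
  also have "\<dots> = (\<Sum>n. \<integral>\<^sup>+\<omega>. g (S n \<omega>) * indicator (first_hit_set j n \<inter> space (M i)) \<omega> \<partial>M i)"
  proof (rule nn_integral_suminf)
    fix n
    show "(\<lambda>\<omega>. g (S n \<omega>) * indicator (first_hit_set j n \<inter> space (M i)) \<omega>) \<in> borel_measurable (M i)"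
      using g_S sets_first_hit_set[OF i] by measurable
  qed
  also have "\<dots> = hit_exp j i g"
    unfolding hit_exp_def hit_at_eq_nn_integral[OF i]
    by (intro suminf_cong nn_integral_cong) (simp add: indicator_inter_arith)
  finally show ?thesis .
qed

lemma hit_exp_one_eq_emeasure:
  assumes i: "i \<in> {1..s}"
  shows "hit_exp j i (\<lambda>_. 1) = emeasure (M i) (returns j \<inter> space (M i))"
proof -
  have "hit_exp j i (\<lambda>_. 1) = (\<integral>\<^sup>+\<omega>. indicator (returns j \<inter> space (M i)) \<omega> \<partial>M i)"
    unfolding nn_integral_Tret_returns[OF i, of "\<lambda>_. 1", symmetric]
    by (intro nn_integral_cong) (simp split: split_indicator)
  then show ?thesis using sets_returns[OF i] by simp
qed

lemma nn_integral_Tret_AE: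
  assumes i: "i \<in> {1..s}" and "AE \<omega> in M i. \<omega> \<in> returns j"
  shows "(\<integral>\<^sup>+\<omega>. g (Tret J S j \<omega>) \<partial>M i) = hit_exp j i g"
  unfolding nn_integral_Tret_returns[OF i, symmetric] using assms(2)
  by (intro nn_integral_cong_AE) auto

lemma hit_exp_first_step:
  assumes i: "i \<in> {1..s}"
  shows "hit_exp j i g = kernel_int i j g + (\<Sum>r\<in>{1..s}-{j}. kernel_int i r (\<lambda>k. hit_exp j r (\<lambda>t. g (\<lambda>u. k u + t u))))"
proof -
  have "hit_exp j i g = (\<Sum>n. hit_at j i (Suc n) g)"
    using sums_Suc[OF summable_sums[OF summableI[of "\<lambda>n. hit_at j i (Suc n) g"]]]
    by (simp add: hit_exp_def sums_iff)
  also have "\<dots> = (\<Sum>n. (if n = 0 then kernel_int i j g else 0)) +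
      (\<Sum>n. \<Sum>r\<in>{1..s}-{j}. kernel_int i r (\<lambda>k. hit_at j r n (\<lambda>t. g (\<lambda>u. k u + t u))))"
    unfolding hit_at_Suc[OF i] by (rule suminf_add[symmetric]) auto
  also have "(\<Sum>n. (if n = 0 then kernel_int i j g else 0)) = kernel_int i j g"
    using sums_single[of 0 "\<lambda>_. kernel_int i j g"] by (simp add: sums_iff)
  also have "(\<Sum>n. \<Sum>r\<in>{1..s}-{j}. kernel_int i r (\<lambda>k. hit_at j r n (\<lambda>t. g (\<lambda>u. k u + t u))))
      = (\<Sum>r\<in>{1..s}-{j}. \<Sum>n. kernel_int i r (\<lambda>k. hit_at j r n (\<lambda>t. g (\<lambda>u. k u + t u))))"
    by (rule suminf_sum) auto
  also have "\<dots> = (\<Sum>r\<in>{1..s}-{j}. kernel_int i r (\<lambda>k. hit_exp j r (\<lambda>t. g (\<lambda>u. k u + t u))))"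
    unfolding kernel_int_def hit_exp_def ennreal_suminf_cmult[symmetric]
    by (intro sum.cong refl nn_integral_suminf[symmetric]) simp
  finally show ?thesis .
qed

lemma hit_exp_trunc_Suc:
  assumes i: "i \<in> {1..s}"
  shows "hit_exp_trunc j (Suc N) i g = (if N = 0 then 0 else kernel_int i j g)
     + (\<Sum>r\<in>{1..s}-{j}. kernel_int i r (\<lambda>k. hit_exp_trunc j N r (\<lambda>t. g (\<lambda>u. k u + t u))))"
proof -
  have "hit_exp_trunc j (Suc N) i g = (\<Sum>n<N. hit_at j i (Suc n) g)"
    unfolding hit_exp_trunc_def sum.lessThan_Suc_shift by simp
  also have "\<dots> = (\<Sum>n<N. (if n = 0 then kernel_int i j g else 0)) +
      (\<Sum>n<N. \<Sum>r\<in>{1..s}-{j}. kernel_int i r (\<lambda>k. hit_at j r n (\<lambda>t. g (\<lambda>u. k u + t u))))"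
    by (simp add: hit_at_Suc[OF i] sum.distrib)
  also have "(\<Sum>n<N. (if n = 0 then kernel_int i j g else 0)) = (if N = 0 then 0 else kernel_int i j g)"
    by (simp add: sum.delta')
  also have "(\<Sum>n<N. \<Sum>r\<in>{1..s}-{j}. kernel_int i r (\<lambda>k. hit_at j r n (\<lambda>t. g (\<lambda>u. k u + t u))))
      = (\<Sum>r\<in>{1..s}-{j}. \<Sum>n<N. kernel_int i r (\<lambda>k. hit_at j r n (\<lambda>t. g (\<lambda>u. k u + t u))))"
    by (rule sum.swap)
  also have "\<dots> = (\<Sum>r\<in>{1..s}-{j}. kernel_int i r (\<lambda>k. hit_exp_trunc j N r (\<lambda>t. g (\<lambda>u. k u + t u))))"
    unfolding hit_exp_trunc_def kernel_int_def
    by (intro sum.cong refl, subst nn_integral_sum[symmetric]) (auto simp: sum_distrib_left)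
  finally show ?thesis .
qed

lemma hit_exp_eq_SUP: "hit_exp j i g = (SUP N. hit_exp_trunc j N i g)"
  unfolding hit_exp_def hit_exp_trunc_def by (rule suminf_eq_SUP)

lemma hit_exp_trunc_le: "hit_exp_trunc j N i g \<le> hit_exp j i g"
  unfolding hit_exp_eq_SUP by (rule SUP_upper) simp

lemma hit_exp_trunc_mono: "hit_exp_trunc j N i g \<le> hit_exp_trunc j (Suc N) i g"
  unfolding hit_exp_trunc_def by simp

lemma hit_exp_add: "hit_exp j i (\<lambda>t. a t + b t) = hit_exp j i a + hit_exp j i b"
  unfolding hit_exp_def hit_at_add by (rule suminf_add[symmetric]) auto

lemma hit_exp_mult_const: "hit_exp j i (\<lambda>t. c * a t) = c * hit_exp j i a"
  unfolding hit_exp_def hit_at_mult_const by simp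

lemma hit_exp_trunc_add: "hit_exp_trunc j N i (\<lambda>t. a t + b t) = hit_exp_trunc j N i a + hit_exp_trunc j N i b"
  unfolding hit_exp_trunc_def hit_at_add by (simp add: sum.distrib)

lemma hit_exp_trunc_mult_const: "hit_exp_trunc j N i (\<lambda>t. c * a t) = c * hit_exp_trunc j N i a"
  unfolding hit_exp_trunc_def hit_at_mult_const by (simp add: sum_distrib_left)


lemma sum_kernel_int_one:
  assumes i: "i \<in> {1..s}"
  shows "(\<Sum>r=1..s. kernel_int i r (\<lambda>_. 1)) = 1"
proof -
  have "1 = (\<integral>\<^sup>+\<omega>. 1 \<partial>M i)"
    using prob_space.emeasure_space_1[OF prob_space_M[OF i]] by simp
  also have "\<dots> = (\<integral>\<^sup>+xs. path_prob i xs \<partial>count_space {xs. length xs = Suc 0})"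
    using nn_integral_history[OF i, of "\<lambda>_. 1" "Suc 0"] by simp
  also have "\<dots> = (\<integral>\<^sup>+x. ennreal (q i (fst x) (snd x)) \<partial>count_space UNIV)"
  proof -
    have "{ys. length ys = 0} = {[]}" by auto
    then show ?thesis
      unfolding nn_integral_count_space_length_Suc
      by (intro nn_integral_cong) (auto simp: nn_integral_count_space_finite)
  qed
  also have "\<dots> = (\<integral>\<^sup>+r. kernel_int i r (\<lambda>_. 1) \<partial>count_space UNIV)"
    unfolding kernel_int_def nn_integral_fst_count_space[symmetric] by simp
  also have "\<dots> = (\<Sum>r\<in>{1..s}. kernel_int i r (\<lambda>_. 1))"
    by (intro nn_integral_count_space') (auto simp: kernel_int_eq_0_outside[OF i])
  finally show ?thesis by simp
qed

lemma kernel_int_one: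
  assumes i: "i \<in> {1..s}"
  shows "kernel_int i r (\<lambda>_. 1) = ennreal (ptrans q i r)"
proof (cases "r \<in> {1..s}")
  case False
  then show ?thesis
    using kernel_int_eq_0_outside[OF i False] q_eq_0_outside[OF i False] by (simp add: ptrans_def)
next
  case True
  have "kernel_int i r (\<lambda>_. 1) \<le> (\<Sum>r=1..s. kernel_int i r (\<lambda>_. 1))"
    using True by (intro member_le_sum) auto
  then have finite: "(\<integral>\<^sup>+k. ennreal (q i r k) \<partial>count_space UNIV) < \<top>"
    using sum_kernel_int_one[OF i] by (simp add: kernel_int_def le_less_trans)
  have "integrable (count_space UNIV) (q i r)"
    using finite q_nonneg[OF i] by (intro integrableI_bounded) auto
  then have summable: "Infinite_Set_Sum.abs_summable_on (q i r) UNIV"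
    by (simp add: abs_summable_on_def)
  have "kernel_int i r (\<lambda>_. 1) = ennreal (infsetsum (q i r) UNIV)"
    unfolding kernel_int_def using summable q_nonneg[OF i]
    by (simp add: nn_integral_conv_infsetsum)
  also have "infsetsum (q i r) UNIV = infsum (q i r) UNIV"
    using summable by (rule infsetsum_infsum)
  finally show ?thesis by (simp add: ptrans_def)
qed

lemma ptrans_nonneg: "i \<in> {1..s} \<Longrightarrow> 0 \<le> ptrans q i r"
  unfolding ptrans_def using q_nonneg by (intro infsum_nonneg) auto

lemma sum_ptrans:
  assumes i: "i \<in> {1..s}"
  shows "(\<Sum>r=1..s. ptrans q i r) = 1"
proof -
  have "ennreal (\<Sum>r=1..s. ptrans q i r) = (\<Sum>r=1..s. kernel_int i r (\<lambda>_. 1))"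
    using ptrans_nonneg[OF i] by (simp add: kernel_int_one[OF i])
  then show ?thesis using sum_kernel_int_one[OF i] by simp
qed

lemma kernel_int_const: "i \<in> {1..s} \<Longrightarrow> kernel_int i r (\<lambda>_. c) = ennreal (ptrans q i r) * c"
  using kernel_int_mult_const[of i r "\<lambda>_. 1" c] by (simp add: kernel_int_one)

lemma kernel_int_eq_0_if_ptrans_eq_0:
  assumes i: "i \<in> {1..s}" and "ptrans q i r = 0"
  shows "kernel_int i r g = 0"
proof -
  have "(\<integral>\<^sup>+k. ennreal (q i r k) \<partial>count_space UNIV) = 0"
    using kernel_int_one[OF i, of r] assms(2) by (simp add: kernel_int_def)
  then have "ennreal (q i r k) = 0" for k
    using nn_integral_ge_point[of k UNIV "\<lambda>k. ennreal (q i r k)"] by simp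
  then show ?thesis by (simp add: kernel_int_def)
qed

lemma m1_eq_sum_kernel_int: "m1 s q w i = (\<Sum>r=1..s. kernel_int i r (\<lambda>k. of_nat (k w)))"
  unfolding m1_def kernel_int_def
  by (intro sum.cong refl nn_integral_cong) (simp add: ennreal_mult'' ennreal_of_nat_eq_real_of_nat)

lemma m2_eq_sum_kernel_int:
  "m2 s q u v i = (\<Sum>r=1..s. kernel_int i r (\<lambda>k. of_nat (k u) * of_nat (k v)))"
  unfolding m2_def kernel_int_def
  by (intro sum.cong refl nn_integral_cong) (simp add: ennreal_mult'' ennreal_of_nat_eq_real_of_nat mult.assoc)

lemma ptrans_mult_m1r:
  assumes i: "i \<in> {1..s}"
  shows "ennreal (ptrans q i r) * m1r q u i r = kernel_int i r (\<lambda>k. of_nat (k u))"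
proof -
  have m1r: "m1r q u i r = kernel_int i r (\<lambda>k. of_nat (k u)) / ennreal (ptrans q i r)"
    unfolding m1r_def kernel_int_def
    by (intro arg_cong2[where f="(/)"] refl nn_integral_cong) (simp add: ennreal_mult'' ennreal_of_nat_eq_real_of_nat)
  show ?thesis
  proof (cases "ptrans q i r = 0")
    case True
    then show ?thesis using kernel_int_eq_0_if_ptrans_eq_0[OF i True] m1r by simp
  next
    case False
    then have "0 < ptrans q i r" using ptrans_nonneg[OF i, of r] by simp
    then show ?thesis unfolding m1r ennreal_times_divide
      by (metis ennreal_eq_divide_if_mult_eq mult.commute)
  qed
qed

lemma hit_prob_first_step:
  "i \<in> {1..s} \<Longrightarrow>
    hit_exp j i (\<lambda>_. 1) = ennreal (ptrans q i j) + (\<Sum>r\<in>{1..s}-{j}. ennreal (ptrans q i r) * hit_exp j r (\<lambda>_. 1))"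
  using hit_exp_first_step[of i j "\<lambda>_. 1"] by (simp add: kernel_int_const kernel_int_one)

lemma hit_prob_le_1: "i \<in> {1..s} \<Longrightarrow> hit_exp j i (\<lambda>_. 1) \<le> 1"
  using hit_exp_one_eq_emeasure prob_space.emeasure_le_1 prob_space_M by metis

text \<open>If from \<open>a\<close> the chain surely reaches \<open>j\<close>, it surely does so from every \<open>b \<noteq> j\<close> it can
  jump to: the first-step equation at \<open>a\<close> is a convex combination equal to its maximum \<open>1\<close>.\<close>

lemma hit_prob_propagates:
  assumes j: "j \<in> {1..s}" and a: "a \<in> {1..s}" and h_a: "hit_exp j a (\<lambda>_. 1) = 1"
    and b: "b \<in> {1..s} - {j}" and p: "0 < ptrans q a b"
  shows "hit_exp j b (\<lambda>_. 1) = 1"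
proof -
  define h where "h r = enn2real (hit_exp j r (\<lambda>_. 1))" for r
  have h: "hit_exp j r (\<lambda>_. 1) = ennreal (h r)" "0 \<le> h r" "h r \<le> 1" if "r \<in> {1..s}" for r
    using hit_prob_le_1[OF that, of j] unfolding h_def
    by (auto simp: ennreal_enn2real_if enn2real_leI top_unique)
  have "ennreal 1 = ennreal (ptrans q a j) + (\<Sum>r\<in>{1..s}-{j}. ennreal (ptrans q a r * h r))"
    using hit_prob_first_step[OF a, of j] h_a h(1,2) ptrans_nonneg[OF a] by (simp add: ennreal_mult)
  also have "\<dots> = ennreal (ptrans q a j + (\<Sum>r\<in>{1..s}-{j}. ptrans q a r * h r))"
  proof -
    have "(\<Sum>r\<in>{1..s}-{j}. ennreal (ptrans q a r * h r)) = ennreal (\<Sum>r\<in>{1..s}-{j}. ptrans q a r * h r)"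
      using ptrans_nonneg[OF a] h(2) by (intro sum_ennreal) auto
    moreover have "0 \<le> (\<Sum>r\<in>{1..s}-{j}. ptrans q a r * h r)"
      using ptrans_nonneg[OF a] h(2) by (intro sum_nonneg mult_nonneg_nonneg) auto
    ultimately show ?thesis using ptrans_nonneg[OF a] by (simp add: ennreal_plus)
  qed
  finally have "ptrans q a j + (\<Sum>r\<in>{1..s}-{j}. ptrans q a r * h r) = 1"
    using ptrans_nonneg[OF a] h(2)
    by (subst (asm) ennreal_inj) (auto intro!: add_nonneg_nonneg sum_nonneg)
  moreover have "ptrans q a j + (\<Sum>r\<in>{1..s}-{j}. ptrans q a r) = 1"
    using sum_ptrans[OF a] j by (simp add: sum.remove)
  ultimately have "h b = 1"
    using b p ptrans_nonneg[OF a] h(3)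
    by (intro sum_mult_eq_sum_imp_eq_one[of "{1..s}-{j}" "ptrans q a" h]) auto
  then show ?thesis using h(1) b by simp
qed

end

section \<open>Moments of return times\<close>

locale ergodic_markov_renewal_chain = markov_renewal_chain s q M J S
  for s :: nat and q :: "nat \<Rightarrow> nat \<Rightarrow> ('d::finite \<Rightarrow> nat) \<Rightarrow> real"
    and M :: "nat \<Rightarrow> 'w measure" and J :: "nat \<Rightarrow> 'w \<Rightarrow> nat" and S :: "nat \<Rightarrow> 'w \<Rightarrow> ('d \<Rightarrow> nat)" +
  fixes \<nu> :: "nat \<Rightarrow> real"
  assumes irreducible_chain: "irreducible_mtmrc s q"
    and ergodic_chain: "ergodic_mtmrc s M J S"
    and stationary_nu: "stationary_dist s q \<nu>"
begin

sublocale stationary_irreducible s "ptrans q" \<nu>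
proof unfold_locales
  show "\<And>a b. a \<in> {1..s} \<Longrightarrow> b \<in> {1..s} \<Longrightarrow> 0 \<le> ptrans q a b"
    by (rule ptrans_nonneg)
  show "\<forall>a\<in>{1..s}. \<forall>b\<in>{1..s}. (a, b) \<in> {(a, b). a \<in> {1..s} \<and> b \<in> {1..s} \<and> 0 < ptrans q a b}\<^sup>*"
    using irreducible_chain unfolding irreducible_mtmrc_def by blast
  show "\<forall>b\<in>{1..s}. \<nu> b = (\<Sum>a=1..s. \<nu> a * ptrans q a b)" "\<forall>a\<in>{1..s}. 0 \<le> \<nu> a" "(\<Sum>a=1..s. \<nu> a) = 1"
    using stationary_nu unfolding stationary_dist_def by blast+
qed

definition second_moment_cross :: "'d \<Rightarrow> 'd \<Rightarrow> nat \<Rightarrow> nat \<Rightarrow> ennreal" where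
  "second_moment_cross u v j i = (\<Sum>r\<in>{1..s}-{j}. ennreal (ptrans q i r) *
     (m1r q u i r * mu1 M J S v r j + m1r q v i r * mu1 M J S u r j))"

context
  fixes j :: nat
  assumes j: "j \<in> {1..s}"
begin

lemma hit_prob_eq_1:
  assumes b: "b \<in> {1..s}"
  shows "hit_exp j b (\<lambda>_. 1) = 1"
proof (rule reachable_avoiding_induct[where Pr="\<lambda>b. hit_exp j b (\<lambda>_. 1) = 1", OF j _ _ b])
  interpret prob_space "M j" using prob_space_M[OF j] .
  have "AE \<omega> in M j. \<exists>l\<ge>1. J l \<omega> = j"
    using ergodic_chain j unfolding ergodic_mtmrc_def by blast
  then have "AE \<omega> in M j. \<omega> \<in> returns j \<inter> space (M j)"
    by (auto simp: returns_def)
  then show "hit_exp j j (\<lambda>_. 1) = 1"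
    unfolding hit_exp_one_eq_emeasure[OF j] using sets_returns[OF j] by (intro emeasure_eq_1_AE) auto
qed (rule hit_prob_propagates[OF j])

lemma AE_returns:
  assumes b: "b \<in> {1..s}"
  shows "AE \<omega> in M b. \<omega> \<in> returns j"
proof -
  interpret prob_space "M b" using prob_space_M[OF b] .
  have "prob (returns j \<inter> space (M b)) = 1"
    using hit_prob_eq_1[OF b] hit_exp_one_eq_emeasure[OF b] by (simp add: emeasure_eq_measure)
  then have "AE \<omega> in M b. \<omega> \<in> returns j \<inter> space (M b)"
    by (rule AE_prob_1)
  then show ?thesis by auto
qed

lemma mu1_eq_hit_exp: "r \<in> {1..s} \<Longrightarrow> mu1 M J S w r j = hit_exp j r (\<lambda>t. of_nat (t w))"
  unfolding mu1_def by (rule nn_integral_Tret_AE[OF _ AE_returns])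

lemma mu2_eq_hit_exp:
  "r \<in> {1..s} \<Longrightarrow> mu2 M J S u v r j = hit_exp j r (\<lambda>t. of_nat (t u) * of_nat (t v))"
  unfolding mu2_def by (rule nn_integral_Tret_AE[OF _ AE_returns])

lemma hit_exp_const: "r \<in> {1..s} \<Longrightarrow> hit_exp j r (\<lambda>_. c) = c"
  using hit_exp_mult_const[of j r c "\<lambda>_. 1"] hit_prob_eq_1 by simp

lemma mu1_first_step:
  assumes i: "i \<in> {1..s}"
  shows "mu1 M J S w i j = m1 s q w i + (\<Sum>r\<in>{1..s}-{j}. ennreal (ptrans q i r) * mu1 M J S w r j)"
proof -
  have "mu1 M J S w i j = kernel_int i j (\<lambda>k. of_nat (k w))
      + (\<Sum>r\<in>{1..s}-{j}. kernel_int i r (\<lambda>k. hit_exp j r (\<lambda>t. of_nat (k w) + of_nat (t w))))"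
    using hit_exp_first_step[OF i, of j "\<lambda>t. of_nat (t w)"] mu1_eq_hit_exp[OF i] by simp
  also have "\<dots> = kernel_int i j (\<lambda>k. of_nat (k w))
      + (\<Sum>r\<in>{1..s}-{j}. kernel_int i r (\<lambda>k. of_nat (k w)) + ennreal (ptrans q i r) * mu1 M J S w r j)"
    by (intro arg_cong2[where f="(+)"] refl sum.cong)
      (simp_all add: hit_exp_add hit_exp_const kernel_int_add kernel_int_const[OF i] mu1_eq_hit_exp)
  also have "\<dots> = m1 s q w i + (\<Sum>r\<in>{1..s}-{j}. ennreal (ptrans q i r) * mu1 M J S w r j)"
    unfolding m1_eq_sum_kernel_int sum.remove[OF finite_atLeastAtMost j] by (simp add: sum.distrib add.assoc)
  finally show ?thesis .
qed

lemma mu1_kac_formula: "ennreal (\<nu> j) * mu1 M J S w j j = (\<Sum>i=1..s. ennreal (\<nu> i) * m1 s q w i)"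
proof (rule kac_equation[where x="\<lambda>i. mu1 M J S w i j" and c="m1 s q w", OF j mu1_first_step])
  show "mu1 M J S w j j < \<top>"
    using ergodic_chain j unfolding ergodic_mtmrc_def mu1_def by (simp add: infinity_ennreal_def)
qed

lemma hit_exp_product_shift:
  assumes r: "r \<in> {1..s}"
  shows "hit_exp j r (\<lambda>t. (of_nat (k u) + of_nat (t u)) * (of_nat (k v) + of_nat (t v)))
    = of_nat (k u) * of_nat (k v) + (of_nat (k u) * mu1 M J S v r j + (of_nat (k v) * mu1 M J S u r j
      + mu2 M J S u v r j))"
proof -
  have "(\<lambda>t. (of_nat (k u) + of_nat (t u)) * (of_nat (k v) + of_nat (t v)) :: ennreal)
      = (\<lambda>t. of_nat (k u) * of_nat (k v) + (of_nat (k u) * of_nat (t v)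
          + (of_nat (k v) * of_nat (t u) + of_nat (t u) * of_nat (t v))))"
    by (simp add: fun_eq_iff algebra_simps)
  then show ?thesis
    by (simp only: hit_exp_add hit_exp_mult_const hit_exp_const[OF r] mu1_eq_hit_exp[OF r] mu2_eq_hit_exp[OF r])
qed

lemma hit_exp_trunc_product_shift_le:
  assumes r: "r \<in> {1..s}"
  shows "hit_exp_trunc j N r (\<lambda>t. of_nat (k u + t u) * of_nat (k v + t v))
    \<le> of_nat (k u) * of_nat (k v) + (of_nat (k u) * mu1 M J S v r j + (of_nat (k v) * mu1 M J S u r j
      + hit_exp_trunc j N r (\<lambda>t. of_nat (t u) * of_nat (t v))))"
proof -
  have "(\<lambda>t. of_nat (k u + t u) * of_nat (k v + t v) :: ennreal)
      = (\<lambda>t. of_nat (k u) * of_nat (k v) * 1 + (of_nat (k u) * of_nat (t v)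
          + (of_nat (k v) * of_nat (t u) + of_nat (t u) * of_nat (t v))))"
    by (simp add: fun_eq_iff algebra_simps)
  then have "hit_exp_trunc j N r (\<lambda>t. of_nat (k u + t u) * of_nat (k v + t v))
      = of_nat (k u) * of_nat (k v) * hit_exp_trunc j N r (\<lambda>_. 1)
        + (of_nat (k u) * hit_exp_trunc j N r (\<lambda>t. of_nat (t v))
        + (of_nat (k v) * hit_exp_trunc j N r (\<lambda>t. of_nat (t u))
        + hit_exp_trunc j N r (\<lambda>t. of_nat (t u) * of_nat (t v))))"
    by (simp only: hit_exp_trunc_add hit_exp_trunc_mult_const)
  also have "\<dots> \<le> of_nat (k u) * of_nat (k v) * 1 + (of_nat (k u) * mu1 M J S v r j
      + (of_nat (k v) * mu1 M J S u r j + hit_exp_trunc j N r (\<lambda>t. of_nat (t u) * of_nat (t v))))"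
  proof -
    have "hit_exp_trunc j N r (\<lambda>_. 1) \<le> 1"
      using hit_exp_trunc_le[of j N r "\<lambda>_. 1"] hit_prob_eq_1[OF r] by simp
    moreover have "hit_exp_trunc j N r (\<lambda>t. of_nat (t w)) \<le> mu1 M J S w r j" for w
      using hit_exp_trunc_le[of j N r] mu1_eq_hit_exp[OF r] by simp
    ultimately show ?thesis by (intro add_mono mult_left_mono order_refl) auto
  qed
  finally show ?thesis by simp
qed

lemma sum_kernel_int_product_shift:
  assumes i: "i \<in> {1..s}"
  shows "kernel_int i j (\<lambda>k. of_nat (k u) * of_nat (k v))
    + (\<Sum>r\<in>{1..s}-{j}. kernel_int i r (\<lambda>k. of_nat (k u) * of_nat (k v)
        + (of_nat (k u) * mu1 M J S v r j + (of_nat (k v) * mu1 M J S u r j + z r))))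
    = m2 s q u v i + second_moment_cross u v j i + (\<Sum>r\<in>{1..s}-{j}. ennreal (ptrans q i r) * z r)"
proof -
  have "kernel_int i r (\<lambda>k. of_nat (k u) * of_nat (k v)
        + (of_nat (k u) * mu1 M J S v r j + (of_nat (k v) * mu1 M J S u r j + z r)))
      = kernel_int i r (\<lambda>k. of_nat (k u) * of_nat (k v))
        + (ennreal (ptrans q i r) * (m1r q u i r * mu1 M J S v r j + m1r q v i r * mu1 M J S u r j)
        + ennreal (ptrans q i r) * z r)" for r
    by (simp add: kernel_int_add kernel_int_mult_const kernel_int_const[OF i]
        ptrans_mult_m1r[OF i, symmetric] algebra_simps)
  then show ?thesis
    unfolding m2_eq_sum_kernel_int sum.remove[OF finite_atLeastAtMost j]
    by (simp add: second_moment_cross_def sum.distrib add.assoc)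
qed

lemma mu2_first_step:
  assumes i: "i \<in> {1..s}"
  shows "mu2 M J S u v i j = m2 s q u v i + second_moment_cross u v j i
    + (\<Sum>r\<in>{1..s}-{j}. ennreal (ptrans q i r) * mu2 M J S u v r j)"
proof -
  have "mu2 M J S u v i j = kernel_int i j (\<lambda>k. of_nat (k u) * of_nat (k v))
      + (\<Sum>r\<in>{1..s}-{j}. kernel_int i r (\<lambda>k.
          hit_exp j r (\<lambda>t. (of_nat (k u) + of_nat (t u)) * (of_nat (k v) + of_nat (t v)))))"
    using hit_exp_first_step[OF i, of j "\<lambda>t. of_nat (t u) * of_nat (t v)"] mu2_eq_hit_exp[OF i] by simp
  also have "\<dots> = m2 s q u v i + second_moment_cross u v j i
      + (\<Sum>r\<in>{1..s}-{j}. ennreal (ptrans q i r) * mu2 M J S u v r j)"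
    unfolding sum_kernel_int_product_shift[OF i, symmetric]
    by (intro arg_cong2[where f="(+)"] refl sum.cong) (simp_all add: hit_exp_product_shift)
  finally show ?thesis .
qed

lemma hit_exp_trunc_product_Suc_le:
  assumes i: "i \<in> {1..s}"
  shows "hit_exp_trunc j (Suc N) i (\<lambda>t. of_nat (t u) * of_nat (t v)) \<le> m2 s q u v i + second_moment_cross u v j i
    + (\<Sum>r\<in>{1..s}-{j}. ennreal (ptrans q i r) * hit_exp_trunc j N r (\<lambda>t. of_nat (t u) * of_nat (t v)))"
proof -
  have "hit_exp_trunc j (Suc N) i (\<lambda>t. of_nat (t u) * of_nat (t v))
      \<le> kernel_int i j (\<lambda>k. of_nat (k u) * of_nat (k v))
        + (\<Sum>r\<in>{1..s}-{j}. kernel_int i r (\<lambda>k.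
            hit_exp_trunc j N r (\<lambda>t. of_nat (k u + t u) * of_nat (k v + t v))))"
    unfolding hit_exp_trunc_Suc[OF i] by (intro add_right_mono) simp
  also have "\<dots> \<le> kernel_int i j (\<lambda>k. of_nat (k u) * of_nat (k v))
      + (\<Sum>r\<in>{1..s}-{j}. kernel_int i r (\<lambda>k. of_nat (k u) * of_nat (k v)
          + (of_nat (k u) * mu1 M J S v r j + (of_nat (k v) * mu1 M J S u r j
          + hit_exp_trunc j N r (\<lambda>t. of_nat (t u) * of_nat (t v))))))"
    by (intro add_left_mono sum_mono kernel_int_mono hit_exp_trunc_product_shift_le) simp
  also have "\<dots> = m2 s q u v i + second_moment_cross u v j i
      + (\<Sum>r\<in>{1..s}-{j}. ennreal (ptrans q i r) * hit_exp_trunc j N r (\<lambda>t. of_nat (t u) * of_nat (t v)))"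
    by (rule sum_kernel_int_product_shift[OF i])
  finally show ?thesis .
qed

text \<open>\<open>mu2\<close> need not be finite a priori; finiteness comes from the truncations
  \<open>hit_exp_trunc\<close>, which satisfy the first-step equation as inequalities.\<close>

lemma mu2_kac_formula:
  "ennreal (\<nu> j) * mu2 M J S u v j j
    = (\<Sum>i=1..s. ennreal (\<nu> i) * (m2 s q u v i + second_moment_cross u v j i))"
proof (rule kac_equation[where x="\<lambda>i. mu2 M J S u v i j"
      and c="\<lambda>i. m2 s q u v i + second_moment_cross u v j i", OF j mu2_first_step])
  assume C: "(\<Sum>i=1..s. ennreal (\<nu> i) * (m2 s q u v i + second_moment_cross u v j i)) < \<top>"
  have "(SUP N. hit_exp_trunc j N j (\<lambda>t. of_nat (t u) * of_nat (t v))) < \<top>"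
    by (rule kac_iterates_bounded[where y="\<lambda>N i. hit_exp_trunc j N i (\<lambda>t. of_nat (t u) * of_nat (t v))"
          and c="\<lambda>i. m2 s q u v i + second_moment_cross u v j i",
          OF j _ hit_exp_trunc_product_Suc_le hit_exp_trunc_mono C])
      (simp add: hit_exp_trunc_def)
  then show "mu2 M J S u v j j < \<top>"
    by (simp add: mu2_eq_hit_exp[OF j] hit_exp_eq_SUP)
qed

end

end

theorem proposition12:
  fixes s :: nat and q :: "nat \<Rightarrow> nat \<Rightarrow> ('d::finite \<Rightarrow> nat) \<Rightarrow> real"
    and M :: "nat \<Rightarrow> 'w measure" and J :: "nat \<Rightarrow> 'w \<Rightarrow> nat" and S :: "nat \<Rightarrow> 'w \<Rightarrow> ('d \<Rightarrow> nat)"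
    and \<nu> :: "nat \<Rightarrow> real" and j :: nat and u v :: 'd
  assumes "mtmrc s q M J S"
    and "irreducible_mtmrc s q"
    and "ergodic_mtmrc s M J S"
    and "stationary_dist s q \<nu>"
    and "j \<in> {1..s}"
  shows "mu1 M J S u j j = (\<Sum>i=1..s. ennreal (\<nu> i) * m1 s q u i) / ennreal (\<nu> j)
    \<and> (\<lambda>w. mu1 M J S w j j) = (\<lambda>w. (\<Sum>i=1..s. ennreal (\<nu> i) * m1 s q w i) / ennreal (\<nu> j))
    \<and> mu2 M J S u v j j =
        (\<Sum>i=1..s. ennreal (\<nu> i) * m2 s q u v i) / ennreal (\<nu> j)
      + (\<Sum>i=1..s. \<Sum>r\<in>{1..s} - {j}. ennreal (\<nu> i) * ennreal (ptrans q i r) *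
            (m1r q u i r * mu1 M J S v r j + m1r q v i r * mu1 M J S u r j)) / ennreal (\<nu> j)"
proof -
  interpret ergodic_markov_renewal_chain s q M J S \<nu>
    by (intro ergodic_markov_renewal_chain.intro markov_renewal_chain.intro
        ergodic_markov_renewal_chain_axioms.intro assms(1-4))
  have j: "j \<in> {1..s}" by (fact assms(5))
  have mu1: "mu1 M J S w j j = (\<Sum>i=1..s. ennreal (\<nu> i) * m1 s q w i) / ennreal (\<nu> j)" for w
    by (rule ennreal_eq_divide_if_mult_eq[OF nu_pos[OF j] mu1_kac_formula[OF j]])
  have "(\<Sum>i=1..s. ennreal (\<nu> i) * (m2 s q u v i + second_moment_cross u v j i))
      = (\<Sum>i=1..s. ennreal (\<nu> i) * m2 s q u v i)
        + (\<Sum>i=1..s. \<Sum>r\<in>{1..s} - {j}. ennreal (\<nu> i) * ennreal (ptrans q i r) *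
            (m1r q u i r * mu1 M J S v r j + m1r q v i r * mu1 M J S u r j))"
    by (simp add: second_moment_cross_def distrib_left sum.distrib sum_distrib_left mult.assoc)
  then have "mu2 M J S u v j j =
        (\<Sum>i=1..s. ennreal (\<nu> i) * m2 s q u v i) / ennreal (\<nu> j)
      + (\<Sum>i=1..s. \<Sum>r\<in>{1..s} - {j}. ennreal (\<nu> i) * ennreal (ptrans q i r) *
            (m1r q u i r * mu1 M J S v r j + m1r q v i r * mu1 M J S u r j)) / ennreal (\<nu> j)"
    using ennreal_eq_divide_if_mult_eq[OF nu_pos[OF j] mu2_kac_formula[OF j]]
    by (simp add: add_divide_distrib_ennreal)
  with mu1 show ?thesis by auto
qed

end
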